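(* For $n=2,3,\dots$ let $\Omega_n=\{1,\dots,n\}$ and $\mathcal P_n=\mathcal P(\Omega_n)$. Let $\{\gamma_n\}_{n\ge2}$ be given, where $\gamma_n$ maps each $p\in\mathcal P_n$ continuously to a bilinear form $\gamma_{n,p}$ on $\mathbb R^{\Omega_n}$. The following are equivalent: (i) there is $c\in\mathbb R$ with $\gamma_{n,p}=c\,\mathrm{Cov}_p$ for all $n$ and all $p\in\mathcal P_n$; (ii) both (ii-1) $\gamma_{n,p}(A,1)=0$ for all $n$, $p\in\mathcal P_n$, $A\in\mathbb R^{\Omega_n}$ (where $1$ is the constant function), and (ii-2) for all $m\le n$ and every surjection $F:\Omega_n\to\Omega_m$, $$\gamma_{m,p^F}(A,B)=\gamma_{n,p}(A\circ F,B\circ F)\quad\forall p\in\mathcal P_n,\ \forall A,B\in\mathbb R^{\Omega_m}.$$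
   Context: $\mathcal P(\Omega)$ is the set of strictly positive probability distributions on a finite set $\Omega$. For $p\in\mathcal P_n$ and a surjection $F:\Omega_n\to\Omega_m$, $p^F\in\mathcal P_m$ is defined by $p^F(x)=\sum_{y\in F^{-1}(x)}p(y)$. $\mathrm{Cov}_p(A,B)=\sum_\omega p(\omega)(A(\omega)-\langle A\rangle_p)(B(\omega)-\langle B\rangle_p)$ with $\langle A\rangle_p=\sum_\omega p(\omega)A(\omega)$. *)

theory Defs
  imports "HOL-Analysis.Analysis"
begin

definition Omega :: "nat \<Rightarrow> nat set" where
  "Omega n = {1..n}"

definition RV :: "nat \<Rightarrow> (nat \<Rightarrow> real) set" where
  "RV n = (Omega n \<rightarrow>\<^sub>E (UNIV :: real set))"

definition Pn :: "nat \<Rightarrow> (nat \<Rightarrow> real) set" where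
  "Pn n = {p \<in> RV n. (\<forall>x\<in>Omega n. 0 < p x) \<and> (\<Sum>x\<in>Omega n. p x) = 1}"

definition surj_map :: "nat \<Rightarrow> nat \<Rightarrow> (nat \<Rightarrow> nat) \<Rightarrow> bool" where
  "surj_map n m F \<longleftrightarrow> F ` Omega n = Omega m"

definition pushfwd :: "nat \<Rightarrow> nat \<Rightarrow> (nat \<Rightarrow> nat) \<Rightarrow> (nat \<Rightarrow> real) \<Rightarrow> (nat \<Rightarrow> real)" where
  "pushfwd n m F p = restrict (\<lambda>x. \<Sum>y\<in>{y \<in> Omega n. F y = x}. p y) (Omega m)"

definition pullback :: "nat \<Rightarrow> (nat \<Rightarrow> nat) \<Rightarrow> (nat \<Rightarrow> real) \<Rightarrow> (nat \<Rightarrow> real)" where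
  "pullback n F A = restrict (A \<circ> F) (Omega n)"

definition one_fun :: "nat \<Rightarrow> (nat \<Rightarrow> real)" where
  "one_fun n = restrict (\<lambda>_. 1) (Omega n)"

definition expect :: "nat \<Rightarrow> (nat \<Rightarrow> real) \<Rightarrow> (nat \<Rightarrow> real) \<Rightarrow> real" where
  "expect n p A = (\<Sum>w\<in>Omega n. p w * A w)"

definition Cov :: "nat \<Rightarrow> (nat \<Rightarrow> real) \<Rightarrow> (nat \<Rightarrow> real) \<Rightarrow> (nat \<Rightarrow> real) \<Rightarrow> real" where
  "Cov n p A B = (\<Sum>w\<in>Omega n. p w * (A w - expect n p A) * (B w - expect n p B))"

definition bilinear_on :: "nat \<Rightarrow> ((nat \<Rightarrow> real) \<Rightarrow> (nat \<Rightarrow> real) \<Rightarrow> real) \<Rightarrow> bool" where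
  "bilinear_on n g \<longleftrightarrow>
     (\<forall>A\<in>RV n. \<forall>B\<in>RV n. \<forall>C\<in>RV n. \<forall>a b :: real.
        g (restrict (\<lambda>w. a * A w + b * C w) (Omega n)) B = a * g A B + b * g C B \<and>
        g A (restrict (\<lambda>w. a * B w + b * C w) (Omega n)) = a * g A B + b * g A C)"

end

theory Submission
  imports Defs
begin

text \<open>
  Invariance under the permutations of \<open>\<Omega>\<^sub>N\<close> forces the form at the uniform distribution
  \<open>u\<^sub>N\<close> to have a Gram matrix \<open>a I + b J\<close> in the basis of indicator functions, and
  \<open>\<gamma>(A, 1) = 0\<close> ties \<open>a\<close> to \<open>b\<close>, so that \<open>\<gamma>\<^sub>N(u\<^sub>N) = c\<^sub>N Cov(u\<^sub>N)\<close>. A distribution with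
  rational weights \<open>k\<^sub>i / N\<close> is the push-forward of \<open>u\<^sub>N\<close> along a map whose fibres have
  \<open>k\<^sub>i\<close> points; covariance is natural under push-forward as well, so \<open>\<gamma> = c\<^sub>N Cov\<close> holds at
  every rational distribution. Viewing \<open>u\<^sub>N\<close> as a push-forward of \<open>u\<^bsub>N M\<^esub>\<close> shows that
  \<open>c\<^sub>N\<close> does not depend on \<open>N\<close>, and continuity extends the identity from the dense set of
  rational distributions to all strictly positive ones.
\<close>

lemma finite_Omega [simp]: "finite (Omega n)"
  by (simp add: Omega_def)

lemma card_Omega [simp]: "card (Omega n) = n"
  by (simp add: Omega_def)

lemma restrict_in_RV [simp]: "restrict f (Omega n) \<in> RV n"
  by (simp add: RV_def)

lemma one_fun_in_RV: "one_fun n \<in> RV n"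
  by (simp add: one_fun_def)

lemma pullback_in_RV: "pullback n F A \<in> RV n"
  by (simp add: pullback_def)

lemma pullback_apply: "y \<in> Omega n \<Longrightarrow> pullback n F A y = A (F y)"
  by (simp add: pullback_def)

lemma RV_undefined: "A \<in> RV n \<Longrightarrow> x \<notin> Omega n \<Longrightarrow> A x = undefined"
  by (auto simp: RV_def PiE_def extensional_def)

lemma Pn_sum: "p \<in> Pn n \<Longrightarrow> (\<Sum>x\<in>Omega n. p x) = 1"
  by (simp add: Pn_def)


lemma sum_pushfwd:
  assumes "F ` Omega n \<subseteq> Omega m"
  shows "(\<Sum>x\<in>Omega m. pushfwd n m F p x * h x) = (\<Sum>y\<in>Omega n. p y * h (F y))"
proof -
  have "(\<Sum>x\<in>Omega m. pushfwd n m F p x * h x)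
      = (\<Sum>x\<in>Omega m. \<Sum>y\<in>{y\<in>Omega n. F y = x}. p y * h (F y))"
    by (intro sum.cong) (auto simp: pushfwd_def sum_distrib_right)
  also have "\<dots> = (\<Sum>y\<in>Omega n. p y * h (F y))"
    by (rule sum.group) (use assms in auto)
  finally show ?thesis .
qed

lemma expect_pushfwd:
  "F ` Omega n \<subseteq> Omega m \<Longrightarrow> expect m (pushfwd n m F p) A = expect n p (pullback n F A)"
  unfolding expect_def by (simp add: sum_pushfwd pullback_apply)

lemma Cov_pushfwd:
  assumes "F ` Omega n \<subseteq> Omega m"
  shows "Cov m (pushfwd n m F p) A B = Cov n p (pullback n F A) (pullback n F B)"
  using sum_pushfwd[OF assms, of p
      "\<lambda>x. (A x - expect n p (pullback n F A)) * (B x - expect n p (pullback n F B))"]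
  unfolding Cov_def expect_pushfwd[OF assms] by (simp add: pullback_apply mult.assoc)

lemma pushfwd_in_Pn:
  assumes F: "surj_map n m F" and p: "p \<in> Pn n"
  shows "pushfwd n m F p \<in> Pn m"
proof -
  have "0 < pushfwd n m F p x" if x: "x \<in> Omega m" for x
  proof -
    have "{y\<in>Omega n. F y = x} \<noteq> {}"
      using x F unfolding surj_map_def by force
    then show ?thesis
      using x p by (auto simp: pushfwd_def Pn_def intro!: sum_pos)
  qed
  moreover have "(\<Sum>x\<in>Omega m. pushfwd n m F p x) = 1"
    using sum_pushfwd[of F n m p "\<lambda>_. 1"] F p by (simp add: surj_map_def Pn_sum)
  ultimately show ?thesis
    by (simp add: Pn_def pushfwd_def)
qed


lemma Cov_one_fun: "p \<in> Pn n \<Longrightarrow> Cov n p A (one_fun n) = 0"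
  by (simp add: Cov_def expect_def one_fun_def Pn_sum)

lemma Cov_eq_expect_mult_diff:
  assumes "p \<in> Pn n"
  shows "Cov n p A B = expect n p (\<lambda>w. A w * B w) - expect n p A * expect n p B"
proof -
  define a b where "a = expect n p A" and "b = expect n p B"
  have "Cov n p A B
      = (\<Sum>w\<in>Omega n. p w * (A w * B w) - b * (p w * A w) - a * (p w * B w) + a * b * p w)"
    unfolding Cov_def a_def[symmetric] b_def[symmetric] by (intro sum.cong) (auto simp: algebra_simps)
  also have "\<dots> = expect n p (\<lambda>w. A w * B w) - b * a - a * b + a * b"
    using Pn_sum[OF assms]
    by (simp add: sum.distrib sum_subtractf expect_def a_def b_def flip: sum_distrib_left)
  finally show ?thesis
    by (simp add: a_def b_def)
qed

definition uniform :: "nat \<Rightarrow> nat \<Rightarrow> real" where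
  "uniform N = restrict (\<lambda>_. 1 / real N) (Omega N)"

lemma uniform_in_Pn: "1 \<le> N \<Longrightarrow> uniform N \<in> Pn N"
  by (simp add: uniform_def Pn_def)

lemma Cov_uniform:
  assumes "1 \<le> N"
  shows "Cov N (uniform N) A B
    = (\<Sum>w\<in>Omega N. A w * B w) / N - (\<Sum>w\<in>Omega N. A w) / N * ((\<Sum>w\<in>Omega N. B w) / N)"
  unfolding Cov_eq_expect_mult_diff[OF uniform_in_Pn[OF assms]]
  by (simp add: expect_def uniform_def sum_divide_distrib)

definition unit_fun :: "nat \<Rightarrow> nat \<Rightarrow> nat \<Rightarrow> real" where
  "unit_fun n i = restrict (\<lambda>w. if w = i then 1 else 0) (Omega n)"

lemma unit_fun_in_RV: "unit_fun n i \<in> RV n"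
  by (simp add: unit_fun_def)

lemma sum_unit_fun_mult:
  assumes "i \<in> Omega n"
  shows "(\<Sum>w\<in>Omega n. unit_fun n i w * f w) = f i"
proof -
  have "(\<Sum>w\<in>Omega n. unit_fun n i w * f w) = (\<Sum>w\<in>Omega n. if w = i then f i else 0)"
    by (rule sum.cong) (auto simp: unit_fun_def)
  then show ?thesis
    using assms by simp
qed

lemma Cov_uniform_unit_fun_nonzero:
  assumes "2 \<le> N"
  shows "Cov N (uniform N) (unit_fun N 1) (unit_fun N 1) \<noteq> 0"
proof -
  have one: "1 \<in> Omega N"
    using assms by (simp add: Omega_def)
  have "(\<Sum>w\<in>Omega N. unit_fun N 1 w * unit_fun N 1 w) = 1"
       "(\<Sum>w\<in>Omega N. unit_fun N 1 w) = 1"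
    using sum_unit_fun_mult[OF one, of "unit_fun N 1"] sum_unit_fun_mult[OF one, of "\<lambda>_. 1"] one
    by (simp_all add: unit_fun_def)
  then have "Cov N (uniform N) (unit_fun N 1) (unit_fun N 1) = (real N - 1) / (real N * real N)"
    using assms by (simp add: Cov_uniform field_simps)
  then show ?thesis
    using assms by simp
qed


section \<open>Bilinear forms in coordinates\<close>

lemma bilinear_on_swap: "bilinear_on n g \<Longrightarrow> bilinear_on n (\<lambda>A B. g B A)"
  by (simp add: bilinear_on_def)

lemma bilinear_on_sum_left:
  assumes g: "bilinear_on n g" and S: "finite S" "\<forall>i\<in>S. X i \<in> RV n" and B: "B \<in> RV n"
  shows "g (restrict (\<lambda>w. \<Sum>i\<in>S. c i * X i w) (Omega n)) B = (\<Sum>i\<in>S. c i * g (X i) B)"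
  using S
proof (induction S rule: finite_induct)
  case empty
  have "g (restrict (\<lambda>w. 0 * B w + 0 * B w) (Omega n)) B = 0 * g B B + 0 * g B B"
    using g B unfolding bilinear_on_def by blast
  then show ?case
    by (simp add: restrict_def)
next
  case (insert x S)
  define C where "C = restrict (\<lambda>w. \<Sum>i\<in>S. c i * X i w) (Omega n)"
  have C: "C \<in> RV n" and X: "X x \<in> RV n"
    using insert.prems by (simp_all add: C_def)
  have "g (restrict (\<lambda>w. \<Sum>i\<in>insert x S. c i * X i w) (Omega n)) B
      = g (restrict (\<lambda>w. c x * X x w + 1 * C w) (Omega n)) B"
    using insert.hyps by (intro arg_cong[where f = "\<lambda>A. g A B"] restrict_ext) (simp add: C_def)
  also have "\<dots> = c x * g (X x) B + 1 * g C B"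
    using g[unfolded bilinear_on_def, rule_format, OF X B C] by blast
  also have "g C B = (\<Sum>i\<in>S. c i * g (X i) B)"
    using insert.IH insert.prems by (simp add: C_def restrict_def)
  finally show ?case
    using insert.hyps by simp
qed

lemma bilinear_on_sum_right:
  assumes "bilinear_on n g" "finite S" "\<forall>i\<in>S. X i \<in> RV n" "A \<in> RV n"
  shows "g A (restrict (\<lambda>w. \<Sum>i\<in>S. c i * X i w) (Omega n)) = (\<Sum>i\<in>S. c i * g A (X i))"
  using bilinear_on_sum_left[OF bilinear_on_swap[OF assms(1)] assms(2-)] .

lemma RV_eq_sum_unit_fun:
  assumes "A \<in> RV n"
  shows "A = restrict (\<lambda>w. \<Sum>i\<in>Omega n. A i * unit_fun n i w) (Omega n)"
proof
  fix w
  have "(\<Sum>i\<in>Omega n. A i * unit_fun n i w) = (\<Sum>i\<in>Omega n. if i = w then A w else 0)"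
    if "w \<in> Omega n"
    by (rule sum.cong) (auto simp: unit_fun_def that)
  then show "A w = restrict (\<lambda>w. \<Sum>i\<in>Omega n. A i * unit_fun n i w) (Omega n) w"
    using assms by (cases "w \<in> Omega n") (simp_all add: RV_undefined)
qed

lemma bilinear_on_expand:
  assumes g: "bilinear_on n g" and A: "A \<in> RV n" and B: "B \<in> RV n"
  shows "g A B = (\<Sum>i\<in>Omega n. \<Sum>j\<in>Omega n. A i * B j * g (unit_fun n i) (unit_fun n j))"
proof -
  have "g A B = (\<Sum>i\<in>Omega n. A i * g (unit_fun n i) B)"
    by (subst RV_eq_sum_unit_fun[OF A], rule bilinear_on_sum_left[OF g])
      (simp_all add: unit_fun_in_RV B)
  also have "\<dots> = (\<Sum>i\<in>Omega n. A i * (\<Sum>j\<in>Omega n. B j * g (unit_fun n i) (unit_fun n j)))"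
    by (subst RV_eq_sum_unit_fun[OF B], subst bilinear_on_sum_right[OF g])
      (simp_all add: unit_fun_in_RV)
  finally show ?thesis
    by (simp add: sum_distrib_left mult.assoc)
qed

lemma sum_sum_if_eq:
  fixes A B :: "nat \<Rightarrow> real"
  assumes "finite S"
  shows "(\<Sum>i\<in>S. \<Sum>j\<in>S. A i * B j * (if i = j then a else b))
     = (a - b) * (\<Sum>i\<in>S. A i * B i) + b * (\<Sum>i\<in>S. A i) * (\<Sum>j\<in>S. B j)"
proof -
  have row: "(\<Sum>j\<in>S. A i * B j * (if i = j then a else b)) = (a - b) * (A i * B i) + b * A i * (\<Sum>j\<in>S. B j)"
    if "i \<in> S" for i
  proof -
    have "(\<Sum>j\<in>S. A i * B j * (if i = j then a else b))
        = (\<Sum>j\<in>S. (if i = j then (a - b) * (A i * B j) else 0) + b * A i * B j)"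
      by (intro sum.cong) (auto simp: algebra_simps)
    then show ?thesis
      using that assms by (simp add: sum.distrib sum_distrib_left)
  qed
  have "(\<Sum>i\<in>S. \<Sum>j\<in>S. A i * B j * (if i = j then a else b))
      = (\<Sum>i\<in>S. (a - b) * (A i * B i) + b * A i * (\<Sum>j\<in>S. B j))"
    by (rule sum.cong) (simp_all add: row)
  also have "\<dots> = (a - b) * (\<Sum>i\<in>S. A i * B i) + b * (\<Sum>i\<in>S. A i) * (\<Sum>j\<in>S. B j)"
    by (simp add: sum.distrib sum_distrib_left sum_distrib_right mult.assoc) (rule sum.swap)
  finally show ?thesis .
qed


section \<open>Permutations of the sample space\<close>

lemma pushfwd_uniform_bij:
  assumes "bij_betw \<sigma> (Omega N) (Omega N)"
  shows "pushfwd N N \<sigma> (uniform N) = uniform N"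
proof
  fix x
  have "{y \<in> Omega N. \<sigma> y = x} = {inv_into (Omega N) \<sigma> x}" if "x \<in> Omega N"
    using that bij_betw_inv_into_left[OF assms] bij_betw_inv_into_right[OF assms]
      bij_betw_apply[OF bij_betw_inv_into[OF assms]] by force
  then show "pushfwd N N \<sigma> (uniform N) x = uniform N x"
    using bij_betw_apply[OF bij_betw_inv_into[OF assms]]
    by (cases "x \<in> Omega N") (simp_all add: pushfwd_def uniform_def)
qed

lemma pullback_unit_fun_bij:
  assumes "bij_betw \<sigma> (Omega N) (Omega N)" and "i \<in> Omega N"
  shows "pullback N \<sigma> (unit_fun N (\<sigma> i)) = unit_fun N i"
proof
  fix w
  show "pullback N \<sigma> (unit_fun N (\<sigma> i)) w = unit_fun N i w"
    using assms bij_betw_apply[OF assms(1)] bij_betw_imp_inj_on[OF assms(1)]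
    by (cases "w \<in> Omega N") (auto simp: pullback_def unit_fun_def inj_on_eq_iff)
qed

lemma exists_bij_Omega_pair:
  assumes "i \<in> Omega N" "j \<in> Omega N" "i \<noteq> j"
  obtains \<sigma> where "bij_betw \<sigma> (Omega N) (Omega N)" "\<sigma> 1 = i" "\<sigma> 2 = j"
proof -
  have N: "2 \<le> N"
    using assms by (auto simp: Omega_def)
  define t where "t = (if i = 2 then 1 else 2 :: nat)"
  define \<sigma> where "\<sigma> = Transposition.transpose t j \<circ> Transposition.transpose 1 i"
  have "t \<in> Omega N" "1 \<in> Omega N"
    using N by (auto simp: t_def Omega_def)
  then have "bij_betw (Transposition.transpose 1 i) (Omega N) (Omega N)"
      "bij_betw (Transposition.transpose t j) (Omega N) (Omega N)"
    using assms by simp_all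
  then have "bij_betw \<sigma> (Omega N) (Omega N)"
    unfolding \<sigma>_def by (rule bij_betw_trans)
  moreover have "\<sigma> 1 = i" "\<sigma> 2 = j"
    using assms(3) by (auto simp: \<sigma>_def t_def Transposition.transpose_def)
  ultimately show thesis
    by (rule that)
qed


lemma exists_map_card_fibres:
  "\<exists>F. F ` Omega (\<Sum>i\<in>Omega n. k i) \<subseteq> Omega n \<and>
       (\<forall>i\<in>Omega n. card {y \<in> Omega (\<Sum>i\<in>Omega n. k i). F y = i} = k i)"
proof -
  define S where "S = (SIGMA i:Omega n. {1..k i})"
  have "card (Omega (\<Sum>i\<in>Omega n. k i)) = card S"
    by (simp add: S_def)
  then obtain h where h: "bij_betw h (Omega (\<Sum>i\<in>Omega n. k i)) S"
    using finite_same_card_bij by (metis S_def finite_Omega finite_SigmaI finite_atLeastAtMost)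
  have "card {y \<in> Omega (\<Sum>i\<in>Omega n. k i). fst (h y) = i} = k i" if "i \<in> Omega n" for i
  proof -
    have "h ` {y \<in> Omega (\<Sum>i\<in>Omega n. k i). fst (h y) = i} = {z \<in> S. fst z = i}"
      using h by (auto simp: bij_betw_def)
    also have "\<dots> = {i} \<times> {1..k i}"
      using that by (auto simp: S_def)
    finally have "bij_betw h {y \<in> Omega (\<Sum>i\<in>Omega n. k i). fst (h y) = i} ({i} \<times> {1..k i})"
      by (rule bij_betw_subset[OF h, rotated]) simp
    then show ?thesis
      by (simp add: bij_betw_same_card)
  qed
  moreover have "(fst \<circ> h) ` Omega (\<Sum>i\<in>Omega n. k i) = fst ` S"
    using h unfolding bij_betw_def by (metis image_comp)
  moreover have "fst ` S \<subseteq> Omega n"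
    by (auto simp: S_def)
  ultimately show ?thesis
    by (intro exI[of _ "fst \<circ> h"]) simp
qed


section \<open>Distributions with rational weights\<close>

definition rational_distr :: "nat \<Rightarrow> (nat \<Rightarrow> nat) \<Rightarrow> nat \<Rightarrow> real" where
  "rational_distr n k = restrict (\<lambda>i. real (k i) / real (\<Sum>j\<in>Omega n. k j)) (Omega n)"

lemma rational_distr_in_Pn:
  assumes "1 \<le> n" "\<forall>i\<in>Omega n. 1 \<le> k i"
  shows "rational_distr n k \<in> Pn n"
proof -
  have "0 < (\<Sum>j\<in>Omega n. real (k j))"
    using assms(1) by (intro sum_pos) (use assms(2) in \<open>force simp: Omega_def Suc_le_eq\<close>)+
  then show ?thesis
    using assms(2)
    by (auto simp: Pn_def rational_distr_def sum_divide_distrib[symmetric] intro!: divide_pos_pos)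
qed

lemma pushfwd_uniform_card_fibres:
  assumes "\<forall>i\<in>Omega n. card {y \<in> Omega N. F y = i} = k i" and "N = (\<Sum>i\<in>Omega n. k i)"
  shows "pushfwd N n F (uniform N) = rational_distr n k"
proof
  fix x
  have "(\<Sum>y\<in>{y\<in>Omega N. F y = x}. uniform N y) = (\<Sum>y\<in>{y\<in>Omega N. F y = x}. 1 / real N)"
    by (rule sum.cong) (auto simp: uniform_def)
  then have "(\<Sum>y\<in>{y\<in>Omega N. F y = x}. uniform N y) = real (k x) / real N" if "x \<in> Omega n"
    using assms(1) that by simp
  then show "pushfwd N n F (uniform N) x = rational_distr n k x"
    by (simp add: pushfwd_def rational_distr_def assms(2))
qed

lemma tendsto_fun_iff_componentwise:
  fixes f :: "'a \<Rightarrow> 'b \<Rightarrow> real"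
  shows "(f \<longlongrightarrow> l) F \<longleftrightarrow> (\<forall>i. ((\<lambda>M. f M i) \<longlongrightarrow> l i) F)"
proof -
  have "limitin (product_topology (\<lambda>i. euclidean) UNIV) f l F \<longleftrightarrow> (\<forall>i. ((\<lambda>M. f M i) \<longlongrightarrow> l i) F)"
    by (simp add: limitin_componentwise)
  then show ?thesis
    by (simp add: euclidean_product_topology)
qed

lemma tendsto_ceiling_mult_div:
  fixes x :: real
  assumes "0 < x"
  shows "(\<lambda>M. real (nat \<lceil>x * real (Suc M)\<rceil>) / real (Suc M)) \<longlonglongrightarrow> x"
proof (rule tendsto_sandwich[of "\<lambda>M. x" _ _ "\<lambda>M. x + inverse (real (Suc M))"])
  have "x \<le> real (nat \<lceil>x * real (Suc M)\<rceil>) / real (Suc M)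
      \<and> real (nat \<lceil>x * real (Suc M)\<rceil>) / real (Suc M) \<le> x + inverse (real (Suc M))" for M
  proof -
    have "real (nat \<lceil>x * real (Suc M)\<rceil>) = of_int \<lceil>x * real (Suc M)\<rceil>"
      using assms by simp
    then have "x * real (Suc M) \<le> real (nat \<lceil>x * real (Suc M)\<rceil>)"
         "real (nat \<lceil>x * real (Suc M)\<rceil>) \<le> x * real (Suc M) + 1"
      using ceiling_correct[of "x * real (Suc M)"] by linarith+
    then show ?thesis
      by (simp add: field_simps del: of_nat_Suc)
  qed
  then show "\<forall>\<^sub>F M in sequentially. x \<le> real (nat \<lceil>x * real (Suc M)\<rceil>) / real (Suc M)"
      "\<forall>\<^sub>F M in sequentially. real (nat \<lceil>x * real (Suc M)\<rceil>) / real (Suc M) \<le> x + inverse (real (Suc M))"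
    by simp_all
  show "(\<lambda>M. x + inverse (real (Suc M))) \<longlonglongrightarrow> x"
    using tendsto_add[OF tendsto_const LIMSEQ_inverse_real_of_nat, of x] by simp
qed simp

lemma rational_distr_dense:
  assumes p: "p \<in> Pn n"
  obtains k where "\<forall>M. \<forall>i\<in>Omega n. 1 \<le> k M i" "(\<lambda>M. rational_distr n (k M)) \<longlonglongrightarrow> p"
proof
  define k where "k M i = nat \<lceil>p i * real (Suc M)\<rceil>" for M i
  have ppos: "0 < p i" if "i \<in> Omega n" for i
    using p that by (simp add: Pn_def)
  show "\<forall>M. \<forall>i\<in>Omega n. 1 \<le> k M i"
    using ppos by (auto simp: k_def intro!: Suc_leI)
  define r where "r M j = real (k M j) / real (Suc M)" for M j
  have r: "(\<lambda>M. r M j) \<longlonglongrightarrow> p j" if "j \<in> Omega n" for j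
    unfolding r_def k_def using tendsto_ceiling_mult_div[OF ppos[OF that]] .
  have "(\<lambda>M. rational_distr n (k M) i) \<longlonglongrightarrow> p i" for i
  proof (cases "i \<in> Omega n")
    case True
    have "rational_distr n (k M) i = r M i / (\<Sum>j\<in>Omega n. r M j)" for M
      using True by (simp add: rational_distr_def r_def flip: sum_divide_distrib)
    moreover have "(\<lambda>M. \<Sum>j\<in>Omega n. r M j) \<longlonglongrightarrow> (\<Sum>j\<in>Omega n. p j)"
      by (intro tendsto_sum r)
    then have "(\<lambda>M. r M i / (\<Sum>j\<in>Omega n. r M j)) \<longlonglongrightarrow> p i / 1"
      using Pn_sum[OF p] by (intro tendsto_divide r True) simp_all
    ultimately show ?thesis
      by simp
  next
    case False
    then show ?thesis
      using p RV_undefined[of p n i] by (simp add: rational_distr_def Pn_def)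
  qed
  then show "(\<lambda>M. rational_distr n (k M)) \<longlonglongrightarrow> p"
    by (simp add: tendsto_fun_iff_componentwise)
qed


section \<open>Forms satisfying the invariance conditions\<close>

locale invariant_form_family =
  fixes \<gamma> :: "nat \<Rightarrow> (nat \<Rightarrow> real) \<Rightarrow> (nat \<Rightarrow> real) \<Rightarrow> (nat \<Rightarrow> real) \<Rightarrow> real"
  assumes bilinear: "\<And>n p. 2 \<le> n \<Longrightarrow> p \<in> Pn n \<Longrightarrow> bilinear_on n (\<gamma> n p)"
    and one_fun_right: "\<And>n p A. 2 \<le> n \<Longrightarrow> p \<in> Pn n \<Longrightarrow> A \<in> RV n \<Longrightarrow> \<gamma> n p A (one_fun n) = 0"
    and pushfwd_invariant: "\<And>m n F p A B. 2 \<le> m \<Longrightarrow> m \<le> n \<Longrightarrow> surj_map n m F \<Longrightarrow> p \<in> Pn n \<Longrightarrow>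
        A \<in> RV m \<Longrightarrow> B \<in> RV m \<Longrightarrow>
        \<gamma> m (pushfwd n m F p) A B = \<gamma> n p (pullback n F A) (pullback n F B)"
begin

definition gram :: "nat \<Rightarrow> nat \<Rightarrow> nat \<Rightarrow> real" where
  "gram N i j = \<gamma> N (uniform N) (unit_fun N i) (unit_fun N j)"

lemma gram_bij:
  assumes "2 \<le> N" "bij_betw \<sigma> (Omega N) (Omega N)" "i \<in> Omega N" "j \<in> Omega N"
  shows "gram N (\<sigma> i) (\<sigma> j) = gram N i j"
  using pushfwd_invariant[of N N \<sigma> "uniform N" "unit_fun N (\<sigma> i)" "unit_fun N (\<sigma> j)"] assms
  by (simp add: gram_def surj_map_def bij_betw_def pushfwd_uniform_bij pullback_unit_fun_bij
      uniform_in_Pn unit_fun_in_RV)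

lemma gram_diag:
  assumes "2 \<le> N" "i \<in> Omega N"
  shows "gram N i i = gram N 1 1"
  using gram_bij[of N "Transposition.transpose 1 i" 1 1] assms by (simp add: Omega_def)

lemma gram_offdiag:
  assumes "2 \<le> N" "i \<in> Omega N" "j \<in> Omega N" "i \<noteq> j"
  shows "gram N i j = gram N 1 2"
proof -
  obtain \<sigma> where "bij_betw \<sigma> (Omega N) (Omega N)" "\<sigma> 1 = i" "\<sigma> 2 = j"
    using exists_bij_Omega_pair assms(2-4) .
  then show ?thesis
    using gram_bij[of N \<sigma> 1 2] assms(1) by (simp add: Omega_def)
qed

lemma gram_row_sum:
  assumes N: "2 \<le> N"
  shows "gram N 1 1 + (real N - 1) * gram N 1 2 = 0"
proof -
  have one: "1 \<in> Omega N"
    using N by (simp add: Omega_def)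
  have u: "uniform N \<in> Pn N"
    using N by (simp add: uniform_in_Pn)
  have "0 = \<gamma> N (uniform N) (unit_fun N 1) (one_fun N)"
    using N by (simp add: one_fun_right u unit_fun_in_RV)
  also have "\<dots> = (\<Sum>i\<in>Omega N. \<Sum>j\<in>Omega N. unit_fun N 1 i * one_fun N j * gram N i j)"
    by (rule bilinear_on_expand[OF bilinear[OF N u] unit_fun_in_RV one_fun_in_RV, folded gram_def])
  also have "\<dots> = (\<Sum>i\<in>Omega N. unit_fun N 1 i * (\<Sum>j\<in>Omega N. gram N i j))"
    by (intro sum.cong refl) (simp add: one_fun_def sum_distrib_left cong: sum.cong)
  also have "\<dots> = (\<Sum>j\<in>Omega N. gram N 1 j)"
    by (rule sum_unit_fun_mult[OF one])
  also have "\<dots> = gram N 1 1 + (\<Sum>j\<in>Omega N - {1}. gram N 1 j)"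
    using one by (simp add: sum.remove)
  also have "(\<Sum>j\<in>Omega N - {1}. gram N 1 j) = (\<Sum>j\<in>Omega N - {1}. gram N 1 2)"
    using N one by (intro sum.cong refl gram_offdiag) auto
  finally show ?thesis
    using N one by simp
qed

definition uniform_scale :: "nat \<Rightarrow> real" where
  "uniform_scale N = real N * (gram N 1 1 - gram N 1 2)"

lemma form_uniform:
  assumes N: "2 \<le> N" and A: "A \<in> RV N" and B: "B \<in> RV N"
  shows "\<gamma> N (uniform N) A B = uniform_scale N * Cov N (uniform N) A B"
proof -
  define a b where "a = gram N 1 1" and "b = gram N 1 2"
  define d where "d = a - b"
  have "real N \<noteq> 0"
    using N by simp
  then have b: "b = - d / real N"
    using gram_row_sum[OF N] by (simp add: a_def b_def d_def field_simps)
  have u: "uniform N \<in> Pn N"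
    using N by (simp add: uniform_in_Pn)
  have "\<gamma> N (uniform N) A B = (\<Sum>i\<in>Omega N. \<Sum>j\<in>Omega N. A i * B j * gram N i j)"
    by (rule bilinear_on_expand[OF bilinear[OF N u] A B, folded gram_def])
  also have "\<dots> = (\<Sum>i\<in>Omega N. \<Sum>j\<in>Omega N. A i * B j * (if i = j then a else b))"
    by (intro sum.cong refl) (simp add: a_def b_def gram_diag gram_offdiag N)
  also have "\<dots> = d * (\<Sum>i\<in>Omega N. A i * B i) + b * (\<Sum>i\<in>Omega N. A i) * (\<Sum>j\<in>Omega N. B j)"
    by (simp add: sum_sum_if_eq d_def)
  also have "\<dots> = real N * d * Cov N (uniform N) A B"
    using \<open>real N \<noteq> 0\<close> N by (simp add: Cov_uniform b field_simps)
  also have "real N * d = uniform_scale N"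
    by (simp add: uniform_scale_def a_def b_def d_def)
  finally show ?thesis .
qed

lemma form_rational_distr:
  assumes n: "2 \<le> n" and k: "\<forall>i\<in>Omega n. 1 \<le> k i" and A: "A \<in> RV n" and B: "B \<in> RV n"
  shows "\<gamma> n (rational_distr n k) A B
       = uniform_scale (\<Sum>j\<in>Omega n. k j) * Cov n (rational_distr n k) A B"
proof -
  define N where "N = (\<Sum>j\<in>Omega n. k j)"
  obtain F where F: "F ` Omega N \<subseteq> Omega n" and card: "\<forall>i\<in>Omega n. card {y\<in>Omega N. F y = i} = k i"
    using exists_map_card_fibres[of k n] unfolding N_def by blast
  have pushfwd: "pushfwd N n F (uniform N) = rational_distr n k"
    using card by (rule pushfwd_uniform_card_fibres) (simp add: N_def)
  have "n \<le> N"
    using sum_mono[of "Omega n" "\<lambda>_. 1::nat" k] k by (simp add: N_def)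
  moreover have "surj_map N n F"
    unfolding surj_map_def
  proof
    show "Omega n \<subseteq> F ` Omega N"
    proof
      fix i
      assume "i \<in> Omega n"
      then have "1 \<le> card {y \<in> Omega N. F y = i}"
        using card k by simp
      then have "{y \<in> Omega N. F y = i} \<noteq> {}"
        by (metis card.empty not_one_le_zero)
      then show "i \<in> F ` Omega N"
        by blast
    qed
  qed (rule F)
  ultimately have "\<gamma> n (rational_distr n k) A B
      = \<gamma> N (uniform N) (pullback N F A) (pullback N F B)"
    using n A B by (simp add: pushfwd_invariant uniform_in_Pn flip: pushfwd)
  also have "\<dots> = uniform_scale N * Cov n (rational_distr n k) A B"
    using n \<open>n \<le> N\<close> by (simp add: form_uniform pullback_in_RV Cov_pushfwd[OF F] flip: pushfwd)
  finally show ?thesis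
    by (simp add: N_def)
qed

lemma uniform_scale_mult:
  assumes N: "2 \<le> N" and M: "2 \<le> M"
  shows "uniform_scale N = uniform_scale (N * M)"
proof -
  have "rational_distr N (\<lambda>_. M) = uniform N"
    using M by (simp add: rational_distr_def uniform_def)
  then have "\<gamma> N (uniform N) (unit_fun N 1) (unit_fun N 1)
      = uniform_scale (N * M) * Cov N (uniform N) (unit_fun N 1) (unit_fun N 1)"
    using form_rational_distr[OF N, of "\<lambda>_. M"] M by (simp add: unit_fun_in_RV mult.commute)
  then show ?thesis
    using form_uniform[OF N unit_fun_in_RV unit_fun_in_RV] Cov_uniform_unit_fun_nonzero[OF N]
    by simp
qed

lemma uniform_scale_eq:
  assumes "2 \<le> N" "2 \<le> M"
  shows "uniform_scale N = uniform_scale M"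
  using uniform_scale_mult[OF assms] uniform_scale_mult[OF assms(2,1)] by (simp add: mult.commute)

lemma form_eq_Cov:
  assumes cont: "continuous_on (Pn n) (\<lambda>p. \<gamma> n p A B)"
    and n: "2 \<le> n" and p: "p \<in> Pn n" and A: "A \<in> RV n" and B: "B \<in> RV n"
  shows "\<gamma> n p A B = uniform_scale 2 * Cov n p A B"
proof -
  obtain k where k: "\<forall>M. \<forall>i\<in>Omega n. 1 \<le> k M i"
    and lim: "(\<lambda>M. rational_distr n (k M)) \<longlonglongrightarrow> p"
    using rational_distr_dense[OF p] .
  have eq: "\<gamma> n (rational_distr n (k M)) A B = uniform_scale 2 * Cov n (rational_distr n (k M)) A B" for M
  proof -
    have "n \<le> (\<Sum>j\<in>Omega n. k M j)"
      using sum_mono[of "Omega n" "\<lambda>_. 1::nat" "k M"] k by simp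
    then show ?thesis
      using form_rational_distr[OF n] k A B n uniform_scale_eq[of "\<Sum>j\<in>Omega n. k M j" 2] by simp
  qed
  have "(\<lambda>M. \<gamma> n (rational_distr n (k M)) A B) \<longlonglongrightarrow> \<gamma> n p A B"
    using k n by (intro continuous_on_tendsto_compose[OF cont lim p]) (simp add: rational_distr_in_Pn)
  moreover have "(\<lambda>M. rational_distr n (k M) i) \<longlonglongrightarrow> p i" for i
    using lim by (simp add: tendsto_fun_iff_componentwise)
  then have "(\<lambda>M. Cov n (rational_distr n (k M)) A B) \<longlonglongrightarrow> Cov n p A B"
    unfolding Cov_def expect_def by (intro tendsto_intros)
  then have "(\<lambda>M. \<gamma> n (rational_distr n (k M)) A B) \<longlonglongrightarrow> uniform_scale 2 * Cov n p A B"
    unfolding eq by (rule tendsto_mult_left)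
  ultimately show ?thesis
    by (rule LIMSEQ_unique)
qed

end


theorem mainTheorem9:
  fixes \<gamma> :: "nat \<Rightarrow> (nat \<Rightarrow> real) \<Rightarrow> (nat \<Rightarrow> real) \<Rightarrow> (nat \<Rightarrow> real) \<Rightarrow> real"
  assumes bilin: "\<And>n p. 2 \<le> n \<Longrightarrow> p \<in> Pn n \<Longrightarrow> bilinear_on n (\<gamma> n p)"
    and cont: "\<And>n A B. 2 \<le> n \<Longrightarrow> A \<in> RV n \<Longrightarrow> B \<in> RV n \<Longrightarrow>
                 continuous_on (Pn n) (\<lambda>p. \<gamma> n p A B)"
  shows "(\<exists>c::real. \<forall>n\<ge>2. \<forall>p\<in>Pn n. \<forall>A\<in>RV n. \<forall>B\<in>RV n.
            \<gamma> n p A B = c * Cov n p A B)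
     \<longleftrightarrow>
         ((\<forall>n\<ge>2. \<forall>p\<in>Pn n. \<forall>A\<in>RV n. \<gamma> n p A (one_fun n) = 0) \<and>
          (\<forall>m n F. 2 \<le> m \<and> m \<le> n \<and> surj_map n m F \<longrightarrow>
             (\<forall>p\<in>Pn n. \<forall>A\<in>RV m. \<forall>B\<in>RV m.
                \<gamma> m (pushfwd n m F p) A B = \<gamma> n p (pullback n F A) (pullback n F B))))"
  (is "?scalar \<longleftrightarrow> ?one_fun \<and> ?pushfwd")
proof
  assume ?scalar
  then obtain c where c: "\<And>n p A B. 2 \<le> n \<Longrightarrow> p \<in> Pn n \<Longrightarrow> A \<in> RV n \<Longrightarrow> B \<in> RV n \<Longrightarrow>
      \<gamma> n p A B = c * Cov n p A B"
    by blast
  have ?pushfwd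
  proof (intro allI impI ballI)
    fix m n F p A B
    assume F: "2 \<le> m \<and> m \<le> n \<and> surj_map n m F" and p: "p \<in> Pn n" and "A \<in> RV m" "B \<in> RV m"
    then have "\<gamma> m (pushfwd n m F p) A B = c * Cov m (pushfwd n m F p) A B"
      by (simp add: c pushfwd_in_Pn)
    also have "\<dots> = c * Cov n p (pullback n F A) (pullback n F B)"
      using F by (simp add: Cov_pushfwd surj_map_def)
    also have "\<dots> = \<gamma> n p (pullback n F A) (pullback n F B)"
      using F p by (simp add: c pullback_in_RV)
    finally show "\<gamma> m (pushfwd n m F p) A B = \<gamma> n p (pullback n F A) (pullback n F B)" .
  qed
  moreover have ?one_fun
    by (simp add: c one_fun_in_RV Cov_one_fun)
  ultimately show "?one_fun \<and> ?pushfwd"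
    by blast
next
  assume "?one_fun \<and> ?pushfwd"
  then interpret invariant_form_family \<gamma>
    using bilin by unfold_locales blast+
  show ?scalar
    using form_eq_Cov[OF cont] by blast
qed

end
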